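(* Let $\mathcal M=\{M^{(\lambda)}:\lambda\in\mathbb R_{>0}\}$ be a quasianalytic weight matrix. Then there exists a quasianalytic weight sequence $L$ such that $M^{(\lambda)}\vartriangleleft L$ for all $\lambda\in\mathbb R_{>0}$; in particular $\mathcal E_{\{\mathcal M\}}(U)\subseteq\mathcal E_{(L)}(U)$ for every non-empty open $U\subseteq\mathbb R^r$.
   Context: For a sequence $M=(M_p)_{p\in\mathbb N}$ of positive reals write $m_p:=M_p/p!$. $M$ is a weight sequence if $1=M_0\le M_1$, $M_p^2\le M_{p-1}M_{p+1}$ for all $p\ge1$, and $\liminf_{p\to\infty}m_p^{1/p}>0$; it is quasianalytic if $\sum_{p\ge1}M_{p-1}/M_p=+\infty$. A weight matrix is a family $\mathcal M=\{M^{(\lambda)}:\lambda\in\mathbb R_{>0}\}$ of weight sequences with $M^{(\lambda)}_p\le M^{(\kappa)}_p$ for all $p$ whenever $\lambda\le\kappa$; it is quasianalytic if every $M^{(\lambda)}$ is quasianalytic. For sequences $M,N$: $M\vartriangleleft N$ means $\lim_{p\to\infty}(M_p/N_p)^{1/p}=0$. For $U\subseteq\mathbb R^r$ open, $K\subseteq U$ compact, $h>0$: $\|f\|^M_{K,h}:=\sup_{\alpha\in\mathbb N^r,x\in K}|\partial^\alpha f(x)|/(h^{|\alpha|}M_{|\alpha|})$. $\mathcal E_{(L)}(U)$ consists of smooth $f$ with $\|f\|^L_{K,h}<\infty$ for all compact $K\subseteq U$ and all $h>0$. $\mathcal E_{\{\mathcal M\}}(U)$ consists of smooth $f$ such that for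 every compact $K\subseteq U$ there exist $\lambda>0$ and $h>0$ with $\|f\|^{M^{(\lambda)}}_{K,h}<\infty$. *)

theory Defs
  imports "HOL-Analysis.Analysis"
begin

definition weight_seq :: "(nat \<Rightarrow> real) \<Rightarrow> bool" where
  "weight_seq M \<longleftrightarrow>
     (\<forall>p. 0 < M p) \<and> M 0 = 1 \<and> M 0 \<le> M 1 \<and>
     (\<forall>p\<ge>1. (M p)\<^sup>2 \<le> M (p - 1) * M (p + 1)) \<and>
     0 < liminf (\<lambda>p. ereal (root p (M p / fact p)))"

text \<open>Quasianalyticity: sum over p >= 1 of M(p-1)/M(p) diverges (positive terms).\<close>
definition quasianalytic_seq :: "(nat \<Rightarrow> real) \<Rightarrow> bool" where
  "quasianalytic_seq M \<longleftrightarrow> \<not> summable (\<lambda>p. M p / M (Suc p))"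

definition weight_matrix :: "(real \<Rightarrow> nat \<Rightarrow> real) \<Rightarrow> bool" where
  "weight_matrix \<M> \<longleftrightarrow>
     (\<forall>l>0. weight_seq (\<M> l)) \<and>
     (\<forall>l k. 0 < l \<and> l \<le> k \<longrightarrow> (\<forall>p. \<M> l p \<le> \<M> k p))"

definition quasianalytic_matrix :: "(real \<Rightarrow> nat \<Rightarrow> real) \<Rightarrow> bool" where
  "quasianalytic_matrix \<M> \<longleftrightarrow> (\<forall>l>0. quasianalytic_seq (\<M> l))"

definition seq_tri :: "(nat \<Rightarrow> real) \<Rightarrow> (nat \<Rightarrow> real) \<Rightarrow> bool" where
  "seq_tri M N \<longleftrightarrow> (\<lambda>p. root p (M p / N p)) \<longlonglongrightarrow> 0"

definition partial_dir :: "'n::finite \<Rightarrow> (real^'n \<Rightarrow> real) \<Rightarrow> real^'n \<Rightarrow> real" where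
  "partial_dir i f x = deriv (\<lambda>t. f (x + t *\<^sub>R axis i 1)) 0"

fun partials :: "'n::finite list \<Rightarrow> (real^'n \<Rightarrow> real) \<Rightarrow> real^'n \<Rightarrow> real" where
  "partials [] f = f"
| "partials (i # is) f = partial_dir i (partials is f)"

definition smooth_on :: "(real^'n::finite) set \<Rightarrow> (real^'n \<Rightarrow> real) \<Rightarrow> bool" where
  "smooth_on U f \<longleftrightarrow>
     (\<forall>ds. continuous_on U (partials ds f) \<and>
        (\<forall>i. \<forall>x\<in>U. (\<lambda>t. partials ds f (x + t *\<^sub>R axis i 1)) differentiable (at 0)))"

definition coord_list :: "'n::finite list" where
  "coord_list = (SOME xs. distinct xs \<and> set xs = UNIV)"

definition mpartial :: "('n::finite \<Rightarrow> nat) \<Rightarrow> (real^'n \<Rightarrow> real) \<Rightarrow> real^'n \<Rightarrow> real" where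
  "mpartial \<alpha> f = partials (concat (map (\<lambda>i. replicate (\<alpha> i) i) coord_list)) f"

definition mi_order :: "('n::finite \<Rightarrow> nat) \<Rightarrow> nat" where
  "mi_order \<alpha> = (\<Sum>i\<in>UNIV. \<alpha> i)"

definition seminorm_finite ::
  "(nat \<Rightarrow> real) \<Rightarrow> (real^'n::finite) set \<Rightarrow> real \<Rightarrow> (real^'n \<Rightarrow> real) \<Rightarrow> bool" where
  "seminorm_finite M K h f \<longleftrightarrow>
     (\<exists>C. \<forall>\<alpha>::'n \<Rightarrow> nat. \<forall>x\<in>K.
        \<bar>mpartial \<alpha> f x\<bar> / (h ^ mi_order \<alpha> * M (mi_order \<alpha>)) \<le> C)"

definition E_beurling :: "(nat \<Rightarrow> real) \<Rightarrow> (real^'n::finite) set \<Rightarrow> (real^'n \<Rightarrow> real) set" where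
  "E_beurling L U = {f. smooth_on U f \<and>
     (\<forall>K. compact K \<and> K \<subseteq> U \<longrightarrow> (\<forall>h>0. seminorm_finite L K h f))}"

definition E_roumieu :: "(real \<Rightarrow> nat \<Rightarrow> real) \<Rightarrow> (real^'n::finite) set \<Rightarrow> (real^'n \<Rightarrow> real) set" where
  "E_roumieu \<M> U = {f. smooth_on U f \<and>
     (\<forall>K. compact K \<and> K \<subseteq> U \<longrightarrow> (\<exists>l>0. \<exists>h>0. seminorm_finite (\<M> l) K h f))}"

end

theory Submission
  imports Defs
begin

text \<open>
  Put $N_k = M^{(k+1)}$. For a weight sequence, quasianalyticity is equivalent to the
  divergence of $\sum_p M_p^{-1/p}$: log-convexity gives $M_p/M_{p+1} \<le> M_p^{-1/p}$, and
  Carleman's inequality gives the converse. Choose $0 = P_0 < P_1 < \<dots>$ such that the block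
  $[P_k, P_{k+1})$ contributes at least $1$ to $\sum_p ((k+1) N_k(p)^{1/p})^{-1}$, and let $L$
  be the pointwise supremum of the sequences $(k+1)^p N_k(p)$, each normalised to be at most $1$
  up to $P_k$. As a supremum of log-convex sequences $L$ is log-convex; it dominates every
  $(k+1)^p N_k(p)$ up to a constant, whence $M^{(\lambda)} \vartriangleleft L$; and on the $k$-th
  block only the indices $j \<le> k$ contribute, so $L_p \<le> (k+1)^p N_k(p)$ there and
  $\sum_p L_p^{-1/p}$ diverges. Finally $M \vartriangleleft L$ makes $h^p M_p / (h'^p L_p)$
  bounded for all $h, h' > 0$, which gives the inclusion of the function classes.
\<close>

section \<open>Carleman's inequality\<close>

lemma fact_ge_power_div_exp: "(real p / exp 1) ^ p \<le> fact p"
proof -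
  have "real p ^ p / fact p \<le> (\<Sum>n. real p ^ n / fact n)"
    using exp_converges[of "real p"] sum_le_suminf[of "\<lambda>n. real p ^ n / fact n" "{p}"]
    by (auto simp: sums_iff divide_inverse mult.commute)
  also have "\<dots> = exp 1 ^ p"
    using exp_converges[of "real p"]
    by (simp add: sums_iff exp_of_nat_mult[symmetric] divide_inverse mult.commute)
  finally show ?thesis by (simp add: power_divide field_simps)
qed

lemma root_prod_le_weighted_sum:
  fixes a :: "nat \<Rightarrow> real"
  assumes pos: "\<And>j. 0 < a j" and p: "p \<ge> 1"
  shows "root p (\<Prod>j=1..p. a j) \<le> exp 1 / (real p)\<^sup>2 * (\<Sum>j=1..p. real j * a j)"
proof -
  have p_pos: "real p > 0" using p by simp
  have prod_pos: "(\<Prod>j=1..p. a j) > 0" using pos by (simp add: prod_pos)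
  \<comment> \<open>AM-GM for the numbers $j a_j$, whose product is $p!$ times that of the $a_j$\<close>
  have "fact p powr (1 / real p) * root p (\<Prod>j=1..p. a j)
      = (\<Prod>j=1..p. real j * a j) powr (1 / real p)"
    using prod_pos p
    by (simp add: prod.distrib fact_prod powr_mult root_powr_inverse)
  also have "\<dots> \<le> (\<Sum>j=1..p. real j * a j / real p)"
    using arith_geom_mean[of "{1..p}" "\<lambda>j. real j * a j"] pos p by (simp add: less_imp_le)
  also have "\<dots> = (\<Sum>j=1..p. real j * a j) / real p"
    by (simp add: sum_divide_distrib)
  finally have amgm: "fact p powr (1 / real p) * root p (\<Prod>j=1..p. a j)
      \<le> (\<Sum>j=1..p. real j * a j) / real p" .
  have "real p / exp 1 = ((real p / exp 1) ^ p) powr (1 / real p)"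
    using p_pos by (simp add: powr_realpow[symmetric] powr_powr)
  also have "\<dots> \<le> fact p powr (1 / real p)"
    using p_pos fact_ge_power_div_exp[of p] by (intro powr_mono2) auto
  finally have "real p / exp 1 * root p (\<Prod>j=1..p. a j)
      \<le> (\<Sum>j=1..p. real j * a j) / real p"
    using amgm prod_pos by (meson mult_right_mono order_trans real_root_ge_zero less_imp_le)
  then show ?thesis using p_pos by (simp add: field_simps power2_eq_square)
qed

text \<open>The second summand on the left is the slack that makes the induction go through.\<close>

lemma sum_weighted_partial_sums_le:
  fixes a :: "nat \<Rightarrow> real"
  assumes pos: "\<And>j. 0 < a j"
  shows "(\<Sum>p=1..P. (\<Sum>j=1..p. real j * a j) / (real p)\<^sup>2)
          + 2 * (\<Sum>j=1..P. real j * a j) / (2 * real P + 1) \<le> 2 * (\<Sum>j=1..P. a j)"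
proof (induction P)
  case 0 then show ?case by simp
next
  case (Suc P)
  define T where "T = (\<Sum>j=1..P. real j * a j)"
  define T' where "T' = T + (real P + 1) * a (Suc P)"
  have "T \<ge> 0" unfolding T_def using pos by (simp add: sum_nonneg less_imp_le)
  then have T'_nonneg: "T' \<ge> 0" unfolding T'_def using pos[of "Suc P"] by simp
  have "1 / (real P + 1)\<^sup>2 = 4 / (4 * (real P + 1)\<^sup>2)"
    by simp
  also have "\<dots> \<le> 4 / ((2 * real P + 1) * (2 * real P + 3))"
    by (intro frac_le mult_pos_pos) (auto simp: power2_eq_square algebra_simps)
  also have "\<dots> = 2 / (2 * real P + 1) - 2 / (2 * real P + 3)"
    by (simp add: field_simps)
  finally have frac: "1 / (real P + 1)\<^sup>2 + 2 / (2 * real P + 3) \<le> 2 / (2 * real P + 1)"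
    by linarith
  have "T' / (real (Suc P))\<^sup>2 + 2 * T' / (2 * real (Suc P) + 1)
      = T' * (1 / (real P + 1)\<^sup>2 + 2 / (2 * real P + 3))"
    by (simp add: field_simps)
  also have "\<dots> \<le> T' * (2 / (2 * real P + 1))"
    by (rule mult_left_mono[OF frac T'_nonneg])
  also have "\<dots> = 2 * T / (2 * real P + 1) + 2 * (real P + 1) / (2 * real P + 1) * a (Suc P)"
    by (simp add: T'_def ring_distribs add_divide_distrib mult_ac)
  also have "\<dots> \<le> 2 * T / (2 * real P + 1) + 2 * a (Suc P)"
    using pos[of "Suc P"] by (intro add_left_mono mult_right_mono) (auto simp: field_simps)
  finally have step: "T' / (real (Suc P))\<^sup>2 + 2 * T' / (2 * real (Suc P) + 1)
      \<le> 2 * T / (2 * real P + 1) + 2 * a (Suc P)" .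
  have T'_eq: "(\<Sum>j=1..Suc P. real j * a j) = T'"
    by (simp add: T_def T'_def)
  have sum_Suc: "(\<Sum>p=1..Suc P. f p) = (\<Sum>p=1..P. f p) + f (Suc P)" for f :: "nat \<Rightarrow> real"
    by simp
  show ?case
    unfolding sum_Suc[of "\<lambda>p. (\<Sum>j=1..p. real j * a j) / (real p)\<^sup>2"] sum_Suc[of a] T'_eq
    using Suc.IH step unfolding T_def by argo
qed

theorem carleman_inequality:
  fixes a :: "nat \<Rightarrow> real"
  assumes pos: "\<And>j. 0 < a j"
  shows "(\<Sum>p=1..P. root p (\<Prod>j=1..p. a j)) \<le> 2 * exp 1 * (\<Sum>j=1..P. a j)"
proof -
  have "(\<Sum>p=1..P. root p (\<Prod>j=1..p. a j))
      \<le> (\<Sum>p=1..P. exp 1 * ((\<Sum>j=1..p. real j * a j) / (real p)\<^sup>2))"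
    using root_prod_le_weighted_sum[OF pos] by (intro sum_mono) auto
  also have "\<dots> = exp 1 * (\<Sum>p=1..P. (\<Sum>j=1..p. real j * a j) / (real p)\<^sup>2)"
    by (simp add: sum_distrib_left)
  also have "\<dots> \<le> exp 1 * (2 * (\<Sum>j=1..P. a j))"
  proof -
    have "0 \<le> (\<Sum>j=1..P. real j * a j)" using pos by (simp add: sum_nonneg less_imp_le)
    then have "0 \<le> 2 * (\<Sum>j=1..P. real j * a j) / (2 * real P + 1)" by simp
    then have "(\<Sum>p=1..P. (\<Sum>j=1..p. real j * a j) / (real p)\<^sup>2) \<le> 2 * (\<Sum>j=1..P. a j)"
      using sum_weighted_partial_sums_le[of a P, OF pos] by linarith
    then show ?thesis by simp
  qed
  finally show ?thesis by simp
qed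

section \<open>Weight sequences and quasianalyticity\<close>

lemma weight_seq_pos: "weight_seq M \<Longrightarrow> 0 < M p"
  unfolding weight_seq_def by auto

lemma weight_seq_0: "weight_seq M \<Longrightarrow> M 0 = 1"
  unfolding weight_seq_def by auto

lemma weight_seq_log_convex:
  assumes "weight_seq M" "p \<ge> 1"
  shows "(M p)\<^sup>2 \<le> M (p - 1) * M (p + 1)"
  using assms unfolding weight_seq_def by auto

lemma weight_seq_ratio_incseq:
  assumes "weight_seq M"
  shows "incseq (\<lambda>p. M (Suc p) / M p)"
proof (rule incseq_SucI)
  fix p
  have "(M (Suc p))\<^sup>2 \<le> M p * M (Suc (Suc p))"
    using weight_seq_log_convex[OF assms, of "Suc p"] by simp
  moreover have "0 < M p" "0 < M (Suc p)" using weight_seq_pos[OF assms] by auto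
  ultimately show "M (Suc p) / M p \<le> M (Suc (Suc p)) / M (Suc p)"
    by (simp add: field_simps power2_eq_square)
qed

lemma weight_seq_ratio_ge_1:
  assumes "weight_seq M"
  shows "1 \<le> M (Suc p) / M p"
proof -
  have "1 \<le> M 1 / M 0" using assms unfolding weight_seq_def by auto
  also have "\<dots> \<le> M (Suc p) / M p" using incseqD[OF weight_seq_ratio_incseq[OF assms]] by simp
  finally show ?thesis .
qed

lemma weight_seq_incseq:
  assumes "weight_seq M"
  shows "incseq M"
proof (rule incseq_SucI)
  fix p show "M p \<le> M (Suc p)"
    using weight_seq_ratio_ge_1[OF assms, of p] weight_seq_pos[OF assms, of p]
    by (simp add: field_simps)
qed

lemma weight_seq_ge_1: "weight_seq M \<Longrightarrow> 1 \<le> M p"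
  using incseqD[OF weight_seq_incseq, of M 0 p] weight_seq_0[of M] by simp

lemma weight_seq_le_ratio_power:
  assumes "weight_seq M"
  shows "M p \<le> (M (Suc p) / M p) ^ p"
proof (induction p)
  case 0 then show ?case using weight_seq_0[OF assms] by simp
next
  case (Suc p)
  have ratio_nonneg: "0 \<le> M (Suc p) / M p"
    using weight_seq_ratio_ge_1[OF assms, of p] by simp
  have "M (Suc p) = M p * (M (Suc p) / M p)" using weight_seq_pos[OF assms, of p] by simp
  also have "\<dots> \<le> (M (Suc p) / M p) ^ p * (M (Suc p) / M p)"
    by (rule mult_right_mono[OF Suc.IH ratio_nonneg])
  also have "\<dots> \<le> (M (Suc (Suc p)) / M (Suc p)) ^ p * (M (Suc (Suc p)) / M (Suc p))"
    using incseqD[OF weight_seq_ratio_incseq[OF assms], of p "Suc p"] ratio_nonneg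
    by (intro mult_mono power_mono) auto
  also have "\<dots> = (M (Suc (Suc p)) / M (Suc p)) ^ Suc p"
    by (simp add: power_Suc2)
  finally show ?case .
qed

lemma weight_seq_ratio_le_inv_root:
  assumes "weight_seq M" "p \<ge> 1"
  shows "M p / M (Suc p) \<le> 1 / root p (M p)"
proof -
  have pos: "0 < M p" "0 < M (Suc p)" using weight_seq_pos[OF assms(1)] by auto
  have "root p (M p) \<le> root p ((M (Suc p) / M p) ^ p)"
    using assms weight_seq_le_ratio_power[OF assms(1), of p] by (intro real_root_le_mono) auto
  also have "\<dots> = M (Suc p) / M p" using assms pos by (simp add: real_root_power_cancel)
  finally show ?thesis using pos assms by (simp add: field_simps)
qed

lemma summable_inv_root_if_summable_ratio:
  fixes L :: "nat \<Rightarrow> real"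
  assumes pos: "\<And>p. 0 < L p" and L0: "L 0 = 1" and sm: "summable (\<lambda>p. L p / L (Suc p))"
  shows "summable (\<lambda>p. 1 / root p (L p))"
proof (rule summableI_nonneg_bounded)
  show "0 \<le> 1 / root p (L p)" for p
    using pos[of p] by (simp add: real_root_ge_zero less_imp_le)
  fix n
  \<comment> \<open>the partial products of $a_j = L_{j-1}/L_j$ telescope to $1/L_p$\<close>
  define a where "a j = L (j - 1) / L j" for j
  have a_pos: "0 < a j" for j unfolding a_def using pos by simp
  have prod_a: "(\<Prod>j=1..p. a j) = 1 / L p" for p
    unfolding a_def using pos L0 by (induction p) (auto simp: less_imp_neq[symmetric])
  have "(\<Sum>p<n. 1 / root p (L p)) \<le> (\<Sum>p\<le>n. 1 / root p (L p))"
    using pos by (intro sum_mono2) (auto simp: real_root_ge_zero less_imp_le)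
  also have "\<dots> = (\<Sum>p=1..n. 1 / root p (L p))"
    by (simp add: atMost_atLeast0 sum.atLeast_Suc_atMost)
  also have "\<dots> = (\<Sum>p=1..n. root p (\<Prod>j=1..p. a j))"
    using prod_a by (intro sum.cong) (simp_all add: real_root_divide)
  also have "\<dots> \<le> 2 * exp 1 * (\<Sum>j=1..n. a j)"
    by (rule carleman_inequality[OF a_pos])
  also have "(\<Sum>j=1..n. a j) = (\<Sum>i<n. L i / L (Suc i))"
    unfolding a_def by (simp add: sum.atLeast1_atMost_eq)
  also have "\<dots> \<le> (\<Sum>p. L p / L (Suc p))"
    using sm pos by (intro sum_le_suminf) (auto intro: less_imp_le)
  finally show "(\<Sum>p<n. 1 / root p (L p)) \<le> 2 * exp 1 * (\<Sum>p. L p / L (Suc p))"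
    by simp
qed

lemma quasianalytic_iff_not_summable_inv_root:
  assumes "weight_seq M"
  shows "quasianalytic_seq M \<longleftrightarrow> \<not> summable (\<lambda>p. 1 / root p (M p))"
proof
  assume "\<not> summable (\<lambda>p. 1 / root p (M p))"
  then show "quasianalytic_seq M"
    unfolding quasianalytic_seq_def
    using summable_inv_root_if_summable_ratio weight_seq_pos[OF assms] weight_seq_0[OF assms]
    by blast
next
  assume "quasianalytic_seq M"
  moreover have "summable (\<lambda>p. M p / M (Suc p))" if "summable (\<lambda>p. 1 / root p (M p))"
  proof (rule summable_comparison_test'[OF that, where N = 1])
    fix p :: nat assume "1 \<le> p"
    then show "norm (M p / M (Suc p)) \<le> 1 / root p (M p)"
      using weight_seq_ratio_le_inv_root[OF assms] weight_seq_pos[OF assms, of p]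
        weight_seq_pos[OF assms, of "Suc p"] by simp
  qed
  ultimately show "\<not> summable (\<lambda>p. 1 / root p (M p))"
    unfolding quasianalytic_seq_def by blast
qed

lemma not_summable_tail_sum_ge:
  fixes f :: "nat \<Rightarrow> real"
  assumes nonneg: "\<And>n. 0 \<le> f n" and not_summable: "\<not> summable f"
  shows "\<exists>n>m. C \<le> (\<Sum>p=m..<n. f p)"
proof (rule ccontr)
  assume "\<not> ?thesis"
  then have tail_lt: "(\<Sum>p=m..<n. f p) < C" if "n > m" for n using that by (meson not_le)
  have "(\<Sum>p<n. f p) \<le> (\<Sum>p<m. f p) + \<bar>C\<bar>" for n
  proof (cases "n > m")
    case True
    then have "(\<Sum>p<n. f p) = (\<Sum>p<m. f p) + (\<Sum>p=m..<n. f p)"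
      using sum.atLeastLessThan_concat[of 0 m n f] by (simp add: atLeast0LessThan)
    then show ?thesis using tail_lt[OF True] by linarith
  next
    case False
    then have "(\<Sum>p<n. f p) \<le> (\<Sum>p<m. f p)" using nonneg by (intro sum_mono2) auto
    then show ?thesis by linarith
  qed
  then have "summable f" by (rule summableI_nonneg_bounded[OF nonneg])
  with not_summable show False ..
qed

lemma not_summable_if_block_sums_ge_1:
  fixes f :: "nat \<Rightarrow> real" and P :: "nat \<Rightarrow> nat"
  assumes nonneg: "\<And>n. 0 \<le> f n" and mono: "mono P"
    and blocks: "\<And>k. 1 \<le> (\<Sum>p=P k..<P (Suc k). f p)"
  shows "\<not> summable f"
proof
  assume summable: "summable f"
  have "real K \<le> (\<Sum>p=P 0..<P K. f p)" for K
  proof (induction K)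
    case (Suc K)
    have "P 0 \<le> P K" "P K \<le> P (Suc K)" using monoD[OF mono] by simp_all
    then have "(\<Sum>p=P 0..<P (Suc K). f p) = (\<Sum>p=P 0..<P K. f p) + (\<Sum>p=P K..<P (Suc K). f p)"
      by (simp add: sum.atLeastLessThan_concat)
    then show ?case using Suc.IH blocks[of K] by simp
  qed simp
  also have "(\<Sum>p=P 0..<P K. f p) \<le> (\<Sum>p<P K. f p)" for K
    using nonneg by (intro sum_mono2) auto
  also have "(\<Sum>p<P K. f p) \<le> suminf f" for K
    using summable nonneg by (intro sum_le_suminf) auto
  finally have le: "real K \<le> suminf f" for K .
  obtain K :: nat where "suminf f < real K"
    using reals_Archimedean2 by blast
  with le[of K] show False by simp
qed

lemma quasianalytic_block_sum_ge_1:
  assumes "weight_seq M" "quasianalytic_seq M" "c > 0"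
  shows "\<exists>n>m. 1 \<le> (\<Sum>p=m..<n. 1 / (c * root p (M p)))"
proof -
  have "\<not> summable (\<lambda>p. 1 / root p (M p))"
    using assms quasianalytic_iff_not_summable_inv_root by blast
  moreover have "0 \<le> 1 / root p (M p)" for p
    using weight_seq_pos[OF assms(1), of p] by (simp add: real_root_ge_zero less_imp_le)
  ultimately obtain n where n: "n > m" "c \<le> (\<Sum>p=m..<n. 1 / root p (M p))"
    using not_summable_tail_sum_ge[of "\<lambda>p. 1 / root p (M p)" m c] by blast
  have "(\<Sum>p=m..<n. 1 / (c * root p (M p))) = (\<Sum>p=m..<n. 1 / root p (M p)) / c"
    by (simp add: sum_divide_distrib mult.commute)
  then show ?thesis using n \<open>c > 0\<close> by (intro exI[of _ n]) (simp add: le_divide_eq)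
qed

lemma liminf_root_div_fact_mono:
  assumes "\<And>p. M p \<le> L p"
  shows "liminf (\<lambda>p. ereal (root p (M p / fact p))) \<le> liminf (\<lambda>p. ereal (root p (L p / fact p)))"
proof (intro Liminf_mono always_eventually allI)
  fix p :: nat
  show "ereal (root p (M p / fact p)) \<le> ereal (root p (L p / fact p))"
  proof (cases "p = 0")
    case False
    then show ?thesis using assms[of p] by (simp add: real_root_le_mono divide_right_mono)
  qed simp
qed

section \<open>The envelope of an increasing family of weight sequences\<close>

locale increasing_weight_family =
  fixes N :: "nat \<Rightarrow> nat \<Rightarrow> real"
  assumes weight_seq: "weight_seq (N k)"
    and mono_index: "j \<le> k \<Longrightarrow> N j p \<le> N k p"

lemma (in increasing_weight_family) one_le_power_mult: "1 \<le> real (Suc k) ^ p * N k p"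
proof -
  have "1 * 1 \<le> real (Suc k) ^ p * N k p"
    using weight_seq_ge_1[OF weight_seq] by (intro mult_mono) auto
  then show ?thesis by simp
qed

locale weight_envelope = increasing_weight_family +
  fixes P :: "nat \<Rightarrow> nat"
  assumes strict_mono_P: "strict_mono P" and P_0: "P 0 = 0"
begin

definition scale :: "nat \<Rightarrow> real" where
  "scale k = real (Suc k) ^ P k * N k (P k)"

definition rescaled :: "nat \<Rightarrow> nat \<Rightarrow> real" where
  "rescaled k p = real (Suc k) ^ p * N k p / scale k"

text \<open>The maximum over $k \<le> p$ is the supremum over all $k$: for $k > p$ we have $p < P_k$,
  hence \<open>rescaled k p \<le> 1 \<le> rescaled 0 p\<close>.\<close>

definition envelope :: "nat \<Rightarrow> real" where
  "envelope p = Max ((\<lambda>k. rescaled k p) ` {..p})"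

lemma scale_ge_1: "1 \<le> scale k"
  unfolding scale_def by (rule one_le_power_mult)

lemma rescaled_pos: "0 < rescaled k p"
  unfolding rescaled_def using weight_seq_pos[OF weight_seq, of k p] scale_ge_1[of k] by simp

lemma rescaled_0: "rescaled 0 p = N 0 p"
  unfolding rescaled_def scale_def using P_0 weight_seq_0[OF weight_seq] by simp

lemma rescaled_le_1:
  assumes "p \<le> P k"
  shows "rescaled k p \<le> 1"
proof -
  have "real (Suc k) ^ p * N k p \<le> scale k"
    unfolding scale_def using assms weight_seq_pos[OF weight_seq, of k p]
    by (intro mult_mono power_increasing incseqD[OF weight_seq_incseq[OF weight_seq]]) auto
  then show ?thesis unfolding rescaled_def using scale_ge_1[of k] by simp
qed

lemma rescaled_le: "rescaled k p \<le> real (Suc k) ^ p * N k p"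
proof -
  have "real (Suc k) ^ p * N k p / scale k \<le> real (Suc k) ^ p * N k p / 1"
    using scale_ge_1[of k] weight_seq_pos[OF weight_seq, of k p] by (intro divide_left_mono) auto
  then show ?thesis unfolding rescaled_def by simp
qed

lemma rescaled_log_convex:
  assumes "p \<ge> 1"
  shows "(rescaled k p)\<^sup>2 \<le> rescaled k (p - 1) * rescaled k (p + 1)"
proof -
  define c where "c = real (Suc k)"
  obtain q where "p = Suc q" using assms by (cases p) auto
  then have "(c ^ p)\<^sup>2 = c ^ (p - 1) * c ^ (p + 1)"
    by (simp add: power2_eq_square mult_ac)
  then have "(rescaled k p)\<^sup>2 = c ^ (p - 1) * c ^ (p + 1) * (N k p)\<^sup>2 / (scale k)\<^sup>2"
    unfolding rescaled_def c_def by (simp add: power2_eq_square)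
  also have "\<dots> \<le> c ^ (p - 1) * c ^ (p + 1) * (N k (p - 1) * N k (p + 1)) / (scale k)\<^sup>2"
    using weight_seq_log_convex[OF weight_seq assms] unfolding c_def
    by (intro divide_right_mono mult_left_mono) auto
  also have "\<dots> = rescaled k (p - 1) * rescaled k (p + 1)"
    unfolding rescaled_def c_def by (simp add: power2_eq_square)
  finally show ?thesis .
qed

lemma envelope_attained: "\<exists>k\<le>p. envelope p = rescaled k p"
proof -
  have "envelope p \<in> (\<lambda>k. rescaled k p) ` {..p}"
    unfolding envelope_def by (intro Max_in) auto
  then show ?thesis by auto
qed

lemma rescaled_le_envelope: "rescaled k p \<le> envelope p"
proof (cases "k \<le> p")
  case True
  then show ?thesis unfolding envelope_def by (intro Max_ge) auto
next
  case False
  then have "p \<le> P k" using strict_mono_imp_increasing[OF strict_mono_P, of k] by linarith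
  then have "rescaled k p \<le> 1" by (rule rescaled_le_1)
  also have "1 \<le> rescaled 0 p" using rescaled_0 weight_seq_ge_1[OF weight_seq] by simp
  also have "rescaled 0 p \<le> envelope p" unfolding envelope_def by (intro Max_ge) auto
  finally show ?thesis .
qed

lemma envelope_pos: "0 < envelope p"
  using rescaled_pos[of 0 p] rescaled_le_envelope[of 0 p] by linarith

lemma envelope_le_on_block:
  assumes "p < P (Suc k)"
  shows "envelope p \<le> real (Suc k) ^ p * N k p"
proof -
  obtain j where j: "envelope p = rescaled j p" using envelope_attained by blast
  show ?thesis
  proof (cases "j \<le> k")
    case True
    have "rescaled j p \<le> real (Suc j) ^ p * N j p" by (rule rescaled_le)
    also have "\<dots> \<le> real (Suc k) ^ p * N k p"
      using True mono_index[OF True, of p] weight_seq_pos[OF weight_seq, of j p]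
      by (intro mult_mono power_mono) auto
    finally show ?thesis unfolding j .
  next
    case False
    then have "P (Suc k) \<le> P j" using strict_mono_P by (simp add: strict_mono_less_eq)
    then have "rescaled j p \<le> 1" using assms by (intro rescaled_le_1) simp
    also have "1 \<le> real (Suc k) ^ p * N k p" by (rule one_le_power_mult)
    finally show ?thesis unfolding j .
  qed
qed

lemma weight_seq_envelope: "weight_seq envelope"
  unfolding weight_seq_def
proof (intro conjI allI impI)
  show "0 < envelope p" for p by (rule envelope_pos)
  show envelope_0: "envelope 0 = 1"
    unfolding envelope_def using rescaled_0 weight_seq_0[OF weight_seq] by simp
  show "envelope 0 \<le> envelope 1"
    using envelope_0 rescaled_le_envelope[of 0 1] rescaled_0 weight_seq_ge_1[OF weight_seq, of 0 1]
    by simp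
  show "(envelope p)\<^sup>2 \<le> envelope (p - 1) * envelope (p + 1)" if "p \<ge> 1" for p
  proof -
    obtain j where j: "envelope p = rescaled j p" using envelope_attained by blast
    have "(rescaled j p)\<^sup>2 \<le> rescaled j (p - 1) * rescaled j (p + 1)"
      using that by (rule rescaled_log_convex)
    also have "\<dots> \<le> envelope (p - 1) * envelope (p + 1)"
      using rescaled_le_envelope rescaled_pos envelope_pos by (intro mult_mono) (auto intro: less_imp_le)
    finally show ?thesis using j by simp
  qed
  have "0 < liminf (\<lambda>p. ereal (root p (N 0 p / fact p)))"
    using weight_seq[of 0] unfolding weight_seq_def by auto
  also have "\<dots> \<le> liminf (\<lambda>p. ereal (root p (envelope p / fact p)))"
    using rescaled_le_envelope[of 0] rescaled_0 by (intro liminf_root_div_fact_mono) simp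
  finally show "0 < liminf (\<lambda>p. ereal (root p (envelope p / fact p)))" .
qed

lemma envelope_dominates: "real (Suc k) ^ p * N k p \<le> scale k * envelope p"
proof -
  have "real (Suc k) ^ p * N k p = scale k * rescaled k p"
    unfolding rescaled_def using scale_ge_1[of k] by simp
  also have "\<dots> \<le> scale k * envelope p"
    using rescaled_le_envelope scale_ge_1[of k] by (intro mult_left_mono) auto
  finally show ?thesis .
qed

lemma inv_root_le_inv_root_envelope:
  assumes "p < P (Suc k)"
  shows "1 / (real (Suc k) * root p (N k p)) \<le> 1 / root p (envelope p)"
proof (cases "p = 0")
  case False
  have "root p (envelope p) \<le> root p (real (Suc k) ^ p * N k p)"
    using envelope_le_on_block[OF assms] False by (intro real_root_le_mono) auto
  also have "\<dots> = real (Suc k) * root p (N k p)"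
    using False by (simp add: real_root_mult real_root_power_cancel)
  finally show ?thesis
    using envelope_pos[of p] weight_seq_pos[OF weight_seq, of k p] False
    by (intro divide_left_mono mult_pos_pos) auto
qed simp

lemma envelope_dominates_power: "\<exists>D>0. \<forall>p. real c ^ p * N k p \<le> D * envelope p"
proof (intro exI[of _ "scale (max k c)"] conjI allI)
  show "0 < scale (max k c)" using scale_ge_1 by (rule less_le_trans[rotated]) simp
  fix p
  have "real c ^ p * N k p \<le> real (Suc (max k c)) ^ p * N (max k c) p"
    using mono_index[of k "max k c" p] weight_seq_pos[OF weight_seq, of k p]
    by (intro mult_mono power_mono) auto
  also have "\<dots> \<le> scale (max k c) * envelope p" by (rule envelope_dominates)
  finally show "real c ^ p * N k p \<le> scale (max k c) * envelope p" .
qed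

end

lemma (in increasing_weight_family) exists_quasianalytic_dominating:
  assumes quasianalytic: "\<And>k. quasianalytic_seq (N k)"
  shows "\<exists>L. weight_seq L \<and> quasianalytic_seq L \<and> (\<forall>k c. \<exists>D>0. \<forall>p. real c ^ p * N k p \<le> D * L p)"
proof -
  have block_exists: "\<exists>n>m. 1 \<le> (\<Sum>p=m..<n. 1 / (real (Suc k) * root p (N k p)))" for k m
    using quasianalytic_block_sum_ge_1[OF weight_seq quasianalytic] by simp
  define next_block where
    "next_block k m = (SOME n. m < n \<and> 1 \<le> (\<Sum>p=m..<n. 1 / (real (Suc k) * root p (N k p))))"
    for k m
  have next_block: "m < next_block k m"
    "1 \<le> (\<Sum>p=m..<next_block k m. 1 / (real (Suc k) * root p (N k p)))" for k m
    using someI_ex[OF block_exists[of m k]] unfolding next_block_def by auto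
  define P where "P = rec_nat 0 next_block"
  have P_Suc: "P (Suc k) = next_block k (P k)" for k unfolding P_def by simp
  interpret weight_envelope N P
    by unfold_locales (simp_all add: strict_mono_Suc_iff P_Suc next_block P_def)
  have "\<not> summable (\<lambda>p. 1 / root p (envelope p))"
  proof (rule not_summable_if_block_sums_ge_1)
    show "0 \<le> 1 / root p (envelope p)" for p
      using envelope_pos[of p] by (simp add: real_root_ge_zero less_imp_le)
    show "mono P" using strict_mono_P by (rule strict_mono_mono)
    fix k
    have "1 \<le> (\<Sum>p=P k..<P (Suc k). 1 / (real (Suc k) * root p (N k p)))"
      unfolding P_Suc by (rule next_block)
    also have "\<dots> \<le> (\<Sum>p=P k..<P (Suc k). 1 / root p (envelope p))"
      using inv_root_le_inv_root_envelope by (intro sum_mono) auto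
    finally show "1 \<le> (\<Sum>p=P k..<P (Suc k). 1 / root p (envelope p))" .
  qed
  then have "quasianalytic_seq envelope"
    using quasianalytic_iff_not_summable_inv_root[OF weight_seq_envelope] by blast
  then show ?thesis
    using weight_seq_envelope envelope_dominates_power by blast
qed

section \<open>Domination and the inclusion of function classes\<close>

lemma seq_tri_if_power_dominated:
  fixes M L :: "nat \<Rightarrow> real"
  assumes M_nonneg: "\<And>p. 0 \<le> M p" and L_pos: "\<And>p. 0 < L p"
    and dominated: "\<And>c::nat. \<exists>D>0. \<forall>p. real c ^ p * M p \<le> D * L p"
  shows "seq_tri M L"
  unfolding seq_tri_def
proof (rule tendstoI)
  fix r :: real assume "r > 0"
  obtain c :: nat where c: "2 / r < real c" using reals_Archimedean2 by blast
  moreover have "0 < 2 / r" using \<open>r > 0\<close> by simp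
  ultimately have c_pos: "real c > 0" by linarith
  obtain D where "D > 0" and D: "\<And>p. real c ^ p * M p \<le> D * L p" using dominated by blast
  have "eventually (\<lambda>p. root p D < 2) sequentially"
    using LIMSEQ_root_const[OF \<open>D > 0\<close>] by (rule order_tendstoD) simp
  moreover have "eventually (\<lambda>p. p > 0) sequentially" by (rule eventually_gt_at_top)
  ultimately show "eventually (\<lambda>p. dist (root p (M p / L p)) 0 < r) sequentially"
  proof eventually_elim
    case (elim p)
    have "M p / L p \<le> D / real c ^ p"
      using D[of p] L_pos[of p] c_pos by (simp add: field_simps)
    then have "root p (M p / L p) \<le> root p (D / real c ^ p)"
      using elim by (intro real_root_le_mono) auto
    also have "\<dots> = root p D / real c"
      using elim c_pos by (simp add: real_root_divide real_root_power_cancel)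
    also have "\<dots> < 2 / real c" using elim c_pos by (simp add: divide_strict_right_mono)
    also have "\<dots> < r" using c c_pos \<open>r > 0\<close> by (simp add: field_simps)
    finally show ?case
      using M_nonneg[of p] L_pos[of p] by (simp add: dist_real_def real_root_ge_zero)
  qed
qed

lemma seq_tri_imp_power_bounded:
  fixes M L :: "nat \<Rightarrow> real"
  assumes tri: "seq_tri M L" and M_nonneg: "\<And>p. 0 \<le> M p" and L_pos: "\<And>p. 0 < L p"
    and "h > 0" "h' > 0"
  shows "\<exists>B. \<forall>q. h ^ q * M q \<le> B * (h' ^ q * L q)"
proof -
  define f where "f q = h ^ q * M q / (h' ^ q * L q)" for q
  have "eventually (\<lambda>q. root q (M q / L q) < h' / h) sequentially"
    using tri unfolding seq_tri_def by (rule order_tendstoD) (use \<open>h > 0\<close> \<open>h' > 0\<close> in simp)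
  then obtain Q where Q: "\<And>q. q \<ge> Q \<Longrightarrow> root q (M q / L q) < h' / h"
    unfolding eventually_sequentially by blast
  define B where "B = Max (insert 1 (f ` {..<max Q 1}))"
  have "f q \<le> B" for q
  proof (cases "q < max Q 1")
    case True then show ?thesis unfolding B_def by (intro Max_ge) auto
  next
    case False
    then have q: "q \<ge> Q" "q > 0" by auto
    have ratio_nonneg: "0 \<le> M q / L q" using M_nonneg[of q] L_pos[of q] by simp
    have "f q = (h / h' * root q (M q / L q)) ^ q"
      using q(2) ratio_nonneg by (simp add: f_def power_mult_distrib power_divide)
    also have "\<dots> \<le> 1"
      using Q[OF q(1)] ratio_nonneg \<open>h > 0\<close> \<open>h' > 0\<close>
      by (intro power_le_one) (auto simp: field_simps real_root_ge_zero)
    also have "1 \<le> B" unfolding B_def by (intro Max_ge) auto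
    finally show ?thesis .
  qed
  then show ?thesis
    using L_pos \<open>h' > 0\<close> by (intro exI[of _ B]) (simp add: f_def divide_le_eq mult.commute)
qed

lemma seminorm_finite_if_power_bounded:
  assumes finite: "seminorm_finite M K h f"
    and M_pos: "\<And>q. 0 < M q" and L_pos: "\<And>q. 0 < L q" and "h > 0" "h' > 0"
    and bounded: "\<And>q. h ^ q * M q \<le> B * (h' ^ q * L q)"
  shows "seminorm_finite L K h' f"
proof -
  obtain C where C: "\<And>\<alpha> x. x \<in> K \<Longrightarrow> \<bar>mpartial \<alpha> f x\<bar> / (h ^ mi_order \<alpha> * M (mi_order \<alpha>)) \<le> C"
    using finite unfolding seminorm_finite_def by blast
  have "\<bar>mpartial \<alpha> f x\<bar> / (h' ^ mi_order \<alpha> * L (mi_order \<alpha>)) \<le> max C 0 * B"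
    if x: "x \<in> K" for \<alpha> :: "'a \<Rightarrow> nat" and x
  proof -
    define q where "q = mi_order \<alpha>"
    define v where "v = \<bar>mpartial \<alpha> f x\<bar>"
    have M_term: "0 < h ^ q * M q" and L_term: "0 < h' ^ q * L q"
      using M_pos L_pos \<open>h > 0\<close> \<open>h' > 0\<close> by simp_all
    have "v / (h' ^ q * L q) = v / (h ^ q * M q) * (h ^ q * M q / (h' ^ q * L q))"
      using \<open>h > 0\<close> M_pos[of q] by (simp add: field_simps)
    also have "\<dots> \<le> max C 0 * B"
    proof (rule mult_mono)
      show "v / (h ^ q * M q) \<le> max C 0"
        using C[OF x, of \<alpha>] unfolding v_def q_def by linarith
      show "h ^ q * M q / (h' ^ q * L q) \<le> B"
        using bounded[of q] L_term by (simp add: divide_le_eq)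
    qed (use M_term L_term in auto)
    finally show ?thesis unfolding v_def q_def .
  qed
  then show ?thesis unfolding seminorm_finite_def by blast
qed

lemma E_roumieu_subset_E_beurling:
  assumes weight_matrix: "weight_matrix \<M>" and L_pos: "\<And>p. 0 < L p"
    and tri: "\<And>l. l > 0 \<Longrightarrow> seq_tri (\<M> l) L"
  shows "E_roumieu \<M> U \<subseteq> E_beurling L U"
proof
  fix f assume f: "f \<in> E_roumieu \<M> U"
  have "seminorm_finite L K h' f" if K: "compact K" "K \<subseteq> U" and "h' > 0" for K h'
  proof -
    obtain l h where "l > 0" "h > 0" and finite: "seminorm_finite (\<M> l) K h f"
      using f K unfolding E_roumieu_def by blast
    have M_pos: "0 < \<M> l p" for p
      using weight_matrix \<open>l > 0\<close> weight_seq_pos unfolding weight_matrix_def by blast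
    obtain B where "\<And>q. h ^ q * \<M> l q \<le> B * (h' ^ q * L q)"
      using seq_tri_imp_power_bounded[OF tri[OF \<open>l > 0\<close>] less_imp_le[OF M_pos] L_pos
          \<open>h > 0\<close> \<open>h' > 0\<close>] by blast
    then show ?thesis
      using seminorm_finite_if_power_bounded[where L = L, OF finite M_pos L_pos \<open>h > 0\<close> \<open>h' > 0\<close>] by blast
  qed
  then show "f \<in> E_beurling L U"
    using f unfolding E_roumieu_def E_beurling_def by blast
qed

lemma weight_matrix_mono: "weight_matrix \<M> \<Longrightarrow> 0 < l \<Longrightarrow> l \<le> k \<Longrightarrow> \<M> l p \<le> \<M> k p"
  unfolding weight_matrix_def by blast

lemma seq_tri_weight_matrix_if_power_dominated:
  assumes weight_matrix: "weight_matrix \<M>" and L_pos: "\<And>p. 0 < L p" and "l > 0"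
    and dominated: "\<And>k c. \<exists>D>0. \<forall>p. real c ^ p * \<M> (real (Suc k)) p \<le> D * L p"
  shows "seq_tri (\<M> l) L"
proof (rule seq_tri_if_power_dominated[OF _ L_pos])
  have "weight_seq (\<M> l)" using weight_matrix \<open>l > 0\<close> unfolding weight_matrix_def by blast
  then show "0 \<le> \<M> l p" for p by (rule less_imp_le[OF weight_seq_pos])
  fix c :: nat
  obtain D where "D > 0" and D: "\<And>p. real c ^ p * \<M> (real (Suc (nat \<lceil>l\<rceil>))) p \<le> D * L p"
    using dominated by blast
  have "real c ^ p * \<M> l p \<le> D * L p" for p
  proof -
    have "\<M> l p \<le> \<M> (real (Suc (nat \<lceil>l\<rceil>))) p"
      using weight_matrix \<open>l > 0\<close> by (rule weight_matrix_mono) (auto, linarith)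
    then have "real c ^ p * \<M> l p \<le> real c ^ p * \<M> (real (Suc (nat \<lceil>l\<rceil>))) p"
      by (intro mult_left_mono) auto
    also have "\<dots> \<le> D * L p" by (rule D)
    finally show ?thesis .
  qed
  with \<open>D > 0\<close> show "\<exists>D>0. \<forall>p. real c ^ p * \<M> l p \<le> D * L p" by blast
qed

theorem mainTheorem9:
  fixes \<M> :: "real \<Rightarrow> nat \<Rightarrow> real"
  assumes "weight_matrix \<M>" and "quasianalytic_matrix \<M>"
  shows "\<exists>L. weight_seq L \<and> quasianalytic_seq L \<and> (\<forall>l>0. seq_tri (\<M> l) L) \<and>
           (\<forall>U :: (real^'n::finite) set. open U \<and> U \<noteq> {} \<longrightarrow> E_roumieu \<M> U \<subseteq> E_beurling L U)"
proof -
  define N where "N k = \<M> (real (Suc k))" for k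
  interpret increasing_weight_family N
    using assms(1) weight_matrix_mono[OF assms(1)] unfolding N_def weight_matrix_def
    by unfold_locales auto
  have "quasianalytic_seq (N k)" for k
    using assms(2) unfolding quasianalytic_matrix_def N_def by simp
  then obtain L where L: "weight_seq L" "quasianalytic_seq L"
    and dominated: "\<And>k c. \<exists>D>0. \<forall>p. real c ^ p * N k p \<le> D * L p"
    using exists_quasianalytic_dominating by blast
  have tri: "seq_tri (\<M> l) L" if "l > 0" for l
    using assms(1) weight_seq_pos[OF L(1)] that dominated[unfolded N_def]
    by (rule seq_tri_weight_matrix_if_power_dominated)
  show ?thesis
    using L tri E_roumieu_subset_E_beurling[OF assms(1) weight_seq_pos[OF L(1)] tri] by blast
qed

end
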